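(* Let $V$ be a finite nonempty set of voters, $A$ a finite set of alternatives, and $F:\mathcal{P}(V,A)\to S_2(A)$ a consular election rule whose range graph $\mathcal{G}(F)$ satisfies edge-connectivity. Then for every linear order $L$ on $A$ there is a unique favourite committee of $L$ in the range of $F$.
   Context: $S_2(A)$ is the set of 2-element subsets of $A$; a consular election rule maps each profile (a linear order on $A$ for each voter) to an element of $S_2(A)$. The range graph $\mathcal{G}(F)$ has vertex set $A$ and edge set equal to the range of $F$. A graph satisfies edge-connectivity if whenever $\{a,b\}$ and $\{c,d\}$ are edges with $a,b,c,d$ pairwise distinct, then $\{a,c\}$ or $\{a,d\}$ is an edge, and $\{b,c\}$ or $\{b,d\}$ is an edge. For a linear order $L$ on $A$ and $X,Y\in S_2(A)$: $X\succeq^O Y$ iff the $L$-best element of $X$ is weakly $L$-above the $L$-best element of $Y$; $X\succeq^P Y$ iff the $L$-worst element of $X$ is weakly $L$-above the $L$-worst element of $Y$. A favourite committee of $L$ in $\mathcal{X}\subseteq S_2(A)$ is an element of $\mathcal{X}$ maximal in $\mathcal{X}$ under both $\succeq^O$ and $\succeq^P$. *)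

theory Defs
  imports Main "HOL-Library.FuncSet"
begin

text \<open>Convention: a linear order L on A is a relation with linear_order_on A L,
  and (x, y) \<in> L means x is ranked weakly above y.\<close>

definition S2 :: "'a set \<Rightarrow> 'a set set" where
  "S2 A = {X. X \<subseteq> A \<and> card X = 2}"

definition linear_orders :: "'a set \<Rightarrow> ('a \<times> 'a) set set" where
  "linear_orders A = {L. linear_order_on A L}"

definition profiles :: "'v set \<Rightarrow> 'a set \<Rightarrow> ('v \<Rightarrow> ('a \<times> 'a) set) set" where
  "profiles V A = (V \<rightarrow>\<^sub>E linear_orders A)"

definition consular_rule ::
  "'v set \<Rightarrow> 'a set \<Rightarrow> (('v \<Rightarrow> ('a \<times> 'a) set) \<Rightarrow> 'a set) \<Rightarrow> bool" where
  "consular_rule V A F \<longleftrightarrow> (\<forall>P \<in> profiles V A. F P \<in> S2 A)"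

definition range_edges ::
  "'v set \<Rightarrow> 'a set \<Rightarrow> (('v \<Rightarrow> ('a \<times> 'a) set) \<Rightarrow> 'a set) \<Rightarrow> 'a set set" where
  "range_edges V A F = F ` profiles V A"

definition edge_connected :: "'a set set \<Rightarrow> bool" where
  "edge_connected E \<longleftrightarrow>
     (\<forall>a b c d. {a, b} \<in> E \<and> {c, d} \<in> E \<and> distinct [a, b, c, d] \<longrightarrow>
        ({a, c} \<in> E \<or> {a, d} \<in> E) \<and> ({b, c} \<in> E \<or> {b, d} \<in> E))"

definition best :: "('a \<times> 'a) set \<Rightarrow> 'a set \<Rightarrow> 'a" where
  "best L X = (THE x. x \<in> X \<and> (\<forall>y \<in> X. (x, y) \<in> L))"

definition worst :: "('a \<times> 'a) set \<Rightarrow> 'a set \<Rightarrow> 'a" where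
  "worst L X = (THE x. x \<in> X \<and> (\<forall>y \<in> X. (y, x) \<in> L))"

definition geq_O :: "('a \<times> 'a) set \<Rightarrow> 'a set \<Rightarrow> 'a set \<Rightarrow> bool" where
  "geq_O L X Y \<longleftrightarrow> (best L X, best L Y) \<in> L"

definition geq_P :: "('a \<times> 'a) set \<Rightarrow> 'a set \<Rightarrow> 'a set \<Rightarrow> bool" where
  "geq_P L X Y \<longleftrightarrow> (worst L X, worst L Y) \<in> L"

definition maximal_in :: "('b \<Rightarrow> 'b \<Rightarrow> bool) \<Rightarrow> 'b set \<Rightarrow> 'b \<Rightarrow> bool" where
  "maximal_in R S X \<longleftrightarrow> X \<in> S \<and> (\<forall>Y \<in> S. R Y X \<longrightarrow> R X Y)"

definition favourite_committee :: "('a \<times> 'a) set \<Rightarrow> 'a set set \<Rightarrow> 'a set \<Rightarrow> bool" where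
  "favourite_committee L \<X> X \<longleftrightarrow> maximal_in (geq_O L) \<X> X \<and> maximal_in (geq_P L) \<X> X"

end

theory Submission
  imports Defs
begin

text \<open>Since L is total, a favourite committee is an edge whose best element is the top
  best element a and whose worst element is the top worst element w over the range; such
  an edge is determined by its best and worst element, giving uniqueness. For existence,
  take edges {a,b} and {c,w} attaining a and w. No edge {a,c} with a \<noteq> c exists, as its
  worst element c lies strictly above w; so edge-connectivity applied to {a,b} and {c,w}
  yields the edge {a,w}.\<close>

context
  fixes A :: "'a set" and L :: "('a \<times> 'a) set"
  assumes lin: "linear_order_on A L"
begin

lemma refl_L: "x \<in> A \<Longrightarrow> (x, x) \<in> L"
  using lin unfolding linear_order_on_def partial_order_on_def preorder_on_def refl_on_def
  by blast

lemma antisym_L: "(x, y) \<in> L \<Longrightarrow> (y, x) \<in> L \<Longrightarrow> x = y"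
  using lin unfolding linear_order_on_def partial_order_on_def antisym_def by blast

lemma trans_L: "(x, y) \<in> L \<Longrightarrow> (y, z) \<in> L \<Longrightarrow> (x, z) \<in> L"
  using lin unfolding linear_order_on_def partial_order_on_def preorder_on_def trans_def
  by blast

lemma total_L: "x \<in> A \<Longrightarrow> y \<in> A \<Longrightarrow> (x, y) \<in> L \<or> (y, x) \<in> L"
  using lin refl_L[of x] unfolding linear_order_on_def total_on_def by metis

lemma best_pair: "x \<in> A \<Longrightarrow> (x, y) \<in> L \<Longrightarrow> best L {x, y} = x"
  unfolding best_def by (rule the_equality) (use refl_L antisym_L in blast)+

lemma worst_pair: "y \<in> A \<Longrightarrow> (x, y) \<in> L \<Longrightarrow> worst L {x, y} = y"
  unfolding worst_def by (rule the_equality) (use refl_L antisym_L in blast)+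

lemma S2_ordered_pair:
  assumes "X \<in> S2 A"
  obtains x y where "X = {x, y}" "x \<in> A" "y \<in> A" "x \<noteq> y" "(x, y) \<in> L"
proof -
  from assms obtain x y where "X = {x, y}" "x \<noteq> y" "X \<subseteq> A"
    unfolding S2_def by (auto simp: card_2_iff)
  with total_L[of x y] that show thesis by (auto simp: insert_commute)
qed

lemma best_worst_S2:
  assumes "X \<in> S2 A"
  shows "best L X \<in> A" "worst L X \<in> A" "X = {best L X, worst L X}"
proof -
  obtain x y where "X = {x, y}" "x \<in> A" "y \<in> A" "(x, y) \<in> L"
    using assms by (rule S2_ordered_pair)
  then show "best L X \<in> A" "worst L X \<in> A" "X = {best L X, worst L X}"
    by (simp_all add: best_pair worst_pair)
qed

lemma ex_greatest_image:
  assumes "finite S" "S \<noteq> {}" "f ` S \<subseteq> A"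
  shows "\<exists>m\<in>S. \<forall>s\<in>S. (f m, f s) \<in> L"
  using assms
proof (induction S rule: finite_ne_induct)
  case (singleton x)
  then show ?case using refl_L by auto
next
  case (insert x S)
  then obtain m where m: "m \<in> S" "\<forall>s\<in>S. (f m, f s) \<in> L" by auto
  have "f x \<in> A" "f m \<in> A" using insert m by auto
  with total_L consider "(f x, f m) \<in> L" | "(f m, f x) \<in> L" by blast
  then show ?case
    by cases (use m trans_L refl_L \<open>f x \<in> A\<close> in blast)+
qed

lemma maximal_in_iff_greatest:
  assumes "f ` S \<subseteq> A"
  shows "maximal_in (\<lambda>X Y. (f X, f Y) \<in> L) S X \<longleftrightarrow> X \<in> S \<and> (\<forall>Y\<in>S. (f X, f Y) \<in> L)"
  using assms total_L unfolding maximal_in_def by blast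

lemma favourite_committee_iff:
  assumes "E \<subseteq> S2 A"
  shows "favourite_committee L E X \<longleftrightarrow>
    X \<in> E \<and> (\<forall>Y\<in>E. (best L X, best L Y) \<in> L) \<and> (\<forall>Y\<in>E. (worst L X, worst L Y) \<in> L)"
proof -
  have "best L ` E \<subseteq> A" "worst L ` E \<subseteq> A"
    using assms best_worst_S2 by blast+
  then show ?thesis
    unfolding favourite_committee_def geq_O_def geq_P_def
    using maximal_in_iff_greatest[of "best L" E X] maximal_in_iff_greatest[of "worst L" E X]
    by blast
qed

lemma favourite_committee_unique:
  assumes "E \<subseteq> S2 A" "favourite_committee L E X" "favourite_committee L E Z"
  shows "X = Z"
proof -
  have "X \<in> S2 A" "Z \<in> S2 A"
    and "(best L X, best L Z) \<in> L" "(best L Z, best L X) \<in> L"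
    "(worst L X, worst L Z) \<in> L" "(worst L Z, worst L X) \<in> L"
    using assms by (auto simp: favourite_committee_iff)
  then have "best L X = best L Z" "worst L X = worst L Z"
    using antisym_L by blast+
  with best_worst_S2(3) \<open>X \<in> S2 A\<close> \<open>Z \<in> S2 A\<close> show ?thesis by metis
qed

lemma edge_connected_top_best_top_worst:
  assumes "edge_connected E" "E \<subseteq> S2 A"
    and ab: "{a, b} \<in> E" "(a, b) \<in> L" "a \<noteq> b"
    and cw: "{c, w} \<in> E" "(c, w) \<in> L" "c \<noteq> w"
    and top_best: "\<forall>Y\<in>E. (a, best L Y) \<in> L"
    and top_worst: "\<forall>Y\<in>E. (w, worst L Y) \<in> L"
  shows "{a, w} \<in> E"
proof -
  have in_A: "a \<in> A" "b \<in> A" "c \<in> A" "w \<in> A"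
    using ab(1) cw(1) \<open>E \<subseteq> S2 A\<close> unfolding S2_def by auto
  have "(a, c) \<in> L"
    using top_best cw in_A best_pair by metis
  have no_ac: "{a, c} \<notin> E" if "a \<noteq> c"
  proof
    assume "{a, c} \<in> E"
    with top_worst have "(w, c) \<in> L"
      using worst_pair[OF \<open>c \<in> A\<close> \<open>(a, c) \<in> L\<close>] by metis
    with cw antisym_L show False by blast
  qed
  have "a \<noteq> w"
    using \<open>(a, c) \<in> L\<close> cw antisym_L by blast
  consider "c = a" | "b = w" | "a \<noteq> c" "b \<noteq> w" by blast
  then show ?thesis
  proof cases
    case 3
    with no_ac ab have "b \<noteq> c" by auto
    with 3 ab cw \<open>a \<noteq> w\<close> have "distinct [a, b, c, w]" by auto
    with \<open>edge_connected E\<close> ab cw have "{a, c} \<in> E \<or> {a, w} \<in> E"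
      unfolding edge_connected_def by blast
    with no_ac 3 show ?thesis by blast
  qed (use ab cw in auto)
qed

lemma favourite_committee_exists:
  assumes "edge_connected E" "E \<subseteq> S2 A" "finite E" "E \<noteq> {}"
  shows "\<exists>X. favourite_committee L E X"
proof -
  have "best L ` E \<subseteq> A" "worst L ` E \<subseteq> A"
    using assms(2) best_worst_S2 by blast+
  then obtain Xa Xw where
    Xa: "Xa \<in> E" "\<forall>Y\<in>E. (best L Xa, best L Y) \<in> L" and
    Xw: "Xw \<in> E" "\<forall>Y\<in>E. (worst L Xw, worst L Y) \<in> L"
    using ex_greatest_image[OF \<open>finite E\<close> \<open>E \<noteq> {}\<close>, of "best L"]
      ex_greatest_image[OF \<open>finite E\<close> \<open>E \<noteq> {}\<close>, of "worst L"] by blast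
  obtain a b where ab: "Xa = {a, b}" "a \<in> A" "(a, b) \<in> L" "a \<noteq> b"
    using Xa(1) assms(2) S2_ordered_pair by blast
  obtain c w where cw: "Xw = {c, w}" "c \<in> A" "w \<in> A" "(c, w) \<in> L" "c \<noteq> w"
    using Xw(1) assms(2) S2_ordered_pair by blast
  have best_Xa: "best L Xa = a" and worst_Xw: "worst L Xw = w"
    using ab cw by (simp_all add: best_pair worst_pair)
  have top_best: "\<forall>Y\<in>E. (a, best L Y) \<in> L" and top_worst: "\<forall>Y\<in>E. (w, worst L Y) \<in> L"
    using Xa(2) Xw(2) by (simp_all only: best_Xa worst_Xw)
  have "(a, c) \<in> L"
    using top_best Xw(1) best_pair[OF cw(2,4)] cw(1) by force
  then have "best L {a, w} = a" "worst L {a, w} = w"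
    using cw(4) trans_L ab(2) cw(3) best_pair worst_pair by blast+
  moreover have "{a, w} \<in> E"
    using edge_connected_top_best_top_worst[OF assms(1,2) _ ab(3,4) _ cw(4,5) top_best top_worst]
      Xa(1) Xw(1) ab(1) cw(1) by simp
  ultimately show ?thesis
    using assms(2) top_best top_worst by (metis favourite_committee_iff)
qed

end

theorem proposition34:
  fixes V :: "'v set" and A :: "'a set"
    and F :: "('v \<Rightarrow> ('a \<times> 'a) set) \<Rightarrow> 'a set"
  assumes "finite V" and "V \<noteq> {}" and "finite A"
    and "consular_rule V A F"
    and "edge_connected (range_edges V A F)"
    and "linear_order_on A L"
  shows "\<exists>!X. favourite_committee L (range_edges V A F) X"
proof -
  let ?E = "range_edges V A F"
  have "?E \<subseteq> S2 A"
    using \<open>consular_rule V A F\<close> unfolding range_edges_def consular_rule_def by auto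
  moreover have "finite ?E"
    using calculation \<open>finite A\<close> finite_subset[of ?E "Pow A"] unfolding S2_def by auto
  \<comment> \<open>The constant profile exists even for V = {}.\<close>
  moreover have "(\<lambda>v. if v \<in> V then L else undefined) \<in> profiles V A"
    using \<open>linear_order_on A L\<close> unfolding profiles_def linear_orders_def by auto
  then have "?E \<noteq> {}"
    unfolding range_edges_def by blast
  ultimately show ?thesis
    using favourite_committee_exists[OF \<open>linear_order_on A L\<close> \<open>edge_connected ?E\<close>]
      favourite_committee_unique[OF \<open>linear_order_on A L\<close>]
    by blast
qed

end
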